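(* An ample class $C\subseteq 2^X$ admits a corner peeling if and only if there exists an acyclic orientation of the edges of $G(C)$ that is a unique sink orientation.
   Context: A cube of $2^X$ is $\{T\cup Z:Z\subseteq Y\}$ with $Y\subseteq X$, $T\subseteq X\setminus Y$, support $\mathrm{supp}=Y$; a cube of $C$ is one contained in $C$. $Y$ is shattered by $C$ if $\{c\cap Y:c\in C\}=2^Y$; $C$ is ample if every shattered set is the support of a cube of $C$. A corner of $C$ is a concept lying in exactly one inclusion-maximal cube of $C$. A corner peeling is an ordering $c_1,\dots,c_m$ of $C$ such that each $c_i$ is a corner of $\{c_1,\dots,c_i\}$. $G(C)$ is the graph on $C$ with an $x$-edge $cc'$ whenever $c\Delta c'=\{x\}$. For an orientation $o$ of $G(C)$, the out-map $r_o(c)$ is the set of $x$ such that the $x$-edge at $c$ is directed away from $c$. $o$ is a unique sink orientation if (C1) for every $c$, the cube of $2^X$ with support $r_o(c)$ containing $c$ is contained in $C$, and (C2) every cube of $C$ contains exactly one vertex that is a sink of $o$ restricted to the edges of that cube. *)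

theory Defs
  imports Main
begin

definition cube_set :: "'a set \<Rightarrow> 'a set \<Rightarrow> 'a set set" where
  "cube_set T Y = {T \<union> Z | Z. Z \<subseteq> Y}"

definition is_cube :: "'a set \<Rightarrow> 'a set set \<Rightarrow> bool" where
  "is_cube X Q \<longleftrightarrow> (\<exists>Y T. Y \<subseteq> X \<and> T \<subseteq> X - Y \<and> Q = cube_set T Y)"

definition cube_of :: "'a set \<Rightarrow> 'a set set \<Rightarrow> 'a set set \<Rightarrow> bool" where
  "cube_of X C Q \<longleftrightarrow> is_cube X Q \<and> Q \<subseteq> C"

definition shatters :: "'a set set \<Rightarrow> 'a set \<Rightarrow> bool" where
  "shatters C Y \<longleftrightarrow> (\<lambda>c. c \<inter> Y) ` C = Pow Y"

definition ample :: "'a set \<Rightarrow> 'a set set \<Rightarrow> bool" where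
  "ample X C \<longleftrightarrow> C \<subseteq> Pow X \<and>
     (\<forall>Y. Y \<subseteq> X \<and> shatters C Y \<longrightarrow> (\<exists>T. T \<subseteq> X - Y \<and> cube_set T Y \<subseteq> C))"

definition max_cube_of :: "'a set \<Rightarrow> 'a set set \<Rightarrow> 'a set set \<Rightarrow> bool" where
  "max_cube_of X C Q \<longleftrightarrow> cube_of X C Q \<and> \<not> (\<exists>Q'. cube_of X C Q' \<and> Q \<subset> Q')"

definition corner :: "'a set \<Rightarrow> 'a set set \<Rightarrow> 'a set \<Rightarrow> bool" where
  "corner X C c \<longleftrightarrow> c \<in> C \<and> (\<exists>!Q. max_cube_of X C Q \<and> c \<in> Q)"

definition corner_peeling :: "'a set \<Rightarrow> 'a set set \<Rightarrow> 'a set list \<Rightarrow> bool" where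
  "corner_peeling X C cs \<longleftrightarrow> distinct cs \<and> set cs = C \<and>
     (\<forall>i < length cs. corner X (set (take (Suc i) cs)) (cs ! i))"

definition symdiff :: "'a set \<Rightarrow> 'a set \<Rightarrow> 'a set" where
  "symdiff A B = (A - B) \<union> (B - A)"

text \<open>Edges of the one-inclusion graph G(C).\<close>
definition is_edge :: "'a set set \<Rightarrow> 'a set \<Rightarrow> 'a set \<Rightarrow> bool" where
  "is_edge C c c' \<longleftrightarrow> c \<in> C \<and> c' \<in> C \<and> (\<exists>x. symdiff c c' = {x})"

definition orientation :: "'a set set \<Rightarrow> ('a set \<times> 'a set) set \<Rightarrow> bool" where
  "orientation C ori \<longleftrightarrow> (\<forall>(c, c') \<in> ori. is_edge C c c') \<and>
     (\<forall>c c'. is_edge C c c' \<longrightarrow> ((c, c') \<in> ori \<longleftrightarrow> (c', c) \<notin> ori))"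

definition out_map :: "'a set \<Rightarrow> ('a set \<times> 'a set) set \<Rightarrow> 'a set \<Rightarrow> 'a set" where
  "out_map X ori c = {x \<in> X. (c, symdiff c {x}) \<in> ori}"

definition unique_sink_orientation :: "'a set \<Rightarrow> 'a set set \<Rightarrow> ('a set \<times> 'a set) set \<Rightarrow> bool" where
  "unique_sink_orientation X C ori \<longleftrightarrow>
     (\<forall>c \<in> C. cube_set (c - out_map X ori c) (out_map X ori c) \<subseteq> C) \<and>
     (\<forall>Q. cube_of X C Q \<longrightarrow> (\<exists>!v. v \<in> Q \<and> (\<forall>w \<in> Q. (v, w) \<notin> ori)))"

end

theory Submission
  imports Defs
begin

(* Given a corner peeling c_1, ..., c_m, orient every edge of G(C) towards its earlier endpoint. The out-edges of c_i stay inside the unique maximal cube of {c_1, ..., c_i}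
   through c_i, which gives (C1). The sink of a cube Q of C is its earliest vertex: removing
   corners one at a time keeps Q \<inter> {c_1, ..., c_i} connected in G, so every later vertex of Q
   has an earlier neighbour in Q.

   Conversely, given an acyclic unique sink orientation, repeatedly remove a source c of the
   remaining set D, which stays closed under out-edges. Flipping all edges in the directions of
   the out-cube of c preserves the unique sink property, so c is the unique source of its
   out-cube; hence the whole out-cube is reachable from c and lies in D. Every cube of D through
   c lies in the out-cube, so c is a corner of D.

   Ampleness enters only through C \<subseteq> 2^X. *)

lemma mem_cube_set_iff: "s \<in> cube_set T Y \<longleftrightarrow> T \<subseteq> s \<and> s \<subseteq> T \<union> Y"
  unfolding cube_set_def by (auto intro!: exI[of _ "s - T"])

lemma fixed_part_mem_cube_set: "T \<in> cube_set T Y"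
  by (simp add: mem_cube_set_iff)

lemma symdiff_commute: "symdiff a b = symdiff b a"
  unfolding symdiff_def by blast

lemma symdiff_eq_singleton_iff: "symdiff a b = {x} \<longleftrightarrow> b = symdiff a {x}"
  unfolding symdiff_def by blast

lemma symdiff_singleton_twice [simp]: "symdiff (symdiff a {x}) {x} = a"
  unfolding symdiff_def by blast

lemma symdiff_symdiff_singleton [simp]: "symdiff a (symdiff a {x}) = {x}"
  unfolding symdiff_def by blast

lemma symdiff_singleton_commute: "symdiff (symdiff a {x}) {y} = symdiff (symdiff a {y}) {x}"
  unfolding symdiff_def by blast

lemma symdiff_subset_support:
  "T \<inter> Y = {} \<Longrightarrow> a \<in> cube_set T Y \<Longrightarrow> b \<in> cube_set T Y \<Longrightarrow> symdiff a b \<subseteq> Y"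
  by (auto simp: mem_cube_set_iff symdiff_def)

lemma symdiff_singleton_mem_cube_set:
  "a \<in> cube_set T Y \<Longrightarrow> x \<in> Y \<Longrightarrow> T \<inter> Y = {} \<Longrightarrow> symdiff a {x} \<in> cube_set T Y"
  by (auto simp: mem_cube_set_iff symdiff_def)

lemma is_edge_iff: "is_edge D a b \<longleftrightarrow> a \<in> D \<and> b \<in> D \<and> (\<exists>x. b = symdiff a {x})"
  unfolding is_edge_def symdiff_eq_singleton_iff ..

lemma is_edge_commute: "is_edge D a b \<longleftrightarrow> is_edge D b a"
  unfolding is_edge_def by (metis symdiff_commute)

lemma is_edge_mono: "is_edge S a b \<Longrightarrow> S \<subseteq> S' \<Longrightarrow> is_edge S' a b"
  unfolding is_edge_def by blast

lemma cube_set_subset_cube_set: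
  assumes "c \<in> cube_set T Y" "c \<in> cube_set T' Y'" "Y \<subseteq> Y'" "T' \<inter> Y' = {}"
  shows "cube_set T Y \<subseteq> cube_set T' Y'"
  using assms unfolding subset_iff mem_cube_set_iff by blast

lemma is_cubeE:
  assumes "is_cube X Q"
  obtains T Y where "Q = cube_set T Y" "Y \<subseteq> X" "T \<subseteq> X" "T \<inter> Y = {}"
  using assms unfolding is_cube_def by blast

lemma max_cube_ofE:
  assumes "max_cube_of X D M"
  obtains T Y where "M = cube_set T Y" "Y \<subseteq> X" "T \<inter> Y = {}" "M \<subseteq> D"
proof -
  have "is_cube X M" "M \<subseteq> D" using assms unfolding max_cube_of_def cube_of_def by blast+
  with that show ?thesis by (auto elim: is_cubeE)
qed

lemma cube_of_cube_set:
  assumes "C \<subseteq> Pow X" "T \<inter> Y = {}" "cube_set T Y \<subseteq> C"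
  shows "cube_of X C (cube_set T Y)"
proof -
  have "T \<union> Y \<in> cube_set T Y" by (simp add: mem_cube_set_iff)
  then have "T \<union> Y \<subseteq> X" using assms by blast
  with assms show ?thesis
    unfolding cube_of_def is_cube_def by (intro conjI exI[of _ Y] exI[of _ T]) auto
qed

lemma edge_cube_set: "cube_set (a - {x}) {x} = {a, symdiff a {x}}"
proof -
  have "s \<in> cube_set (a - {x}) {x} \<longleftrightarrow> s = a - {x} \<or> s = insert x a" for s
    unfolding mem_cube_set_iff by blast
  then show ?thesis by (cases "x \<in> a") (auto simp: symdiff_def insert_absorb)
qed

lemma cube_of_edge:
  assumes "D \<subseteq> Pow X" "is_edge D a b"
  shows "cube_of X D {a, b}"
proof -
  obtain x where b: "b = symdiff a {x}" using assms(2) unfolding is_edge_iff by blast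
  have "cube_set (a - {x}) {x} \<subseteq> D" using assms(2) unfolding edge_cube_set b is_edge_def by blast
  then have "cube_of X D (cube_set (a - {x}) {x})" by (intro cube_of_cube_set[OF assms(1)]) auto
  then show ?thesis unfolding b edge_cube_set .
qed

lemma max_cube_of_superset:
  assumes "finite D" "cube_of X D E"
  obtains M where "max_cube_of X D M" "E \<subseteq> M"
proof -
  let ?F = "{Q. cube_of X D Q \<and> E \<subseteq> Q}"
  have "?F \<subseteq> Pow D" by (auto simp: cube_of_def)
  then have "finite ?F" using assms(1) finite_subset by blast
  moreover have "E \<in> ?F" using assms(2) by blast
  ultimately obtain M where M: "M \<in> ?F" "\<forall>Q\<in>?F. M \<subseteq> Q \<longrightarrow> M = Q"
    using finite_has_maximal[of ?F] by blast
  then have "max_cube_of X D M" unfolding max_cube_of_def psubset_eq by blast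
  with M(1) show ?thesis using that by blast
qed

section \<open>Connectivity of the one-inclusion graph\<close>

definition G_connected :: "'a set set \<Rightarrow> bool" where
  "G_connected S \<longleftrightarrow> (\<forall>A \<subseteq> S. A \<noteq> {} \<longrightarrow> A \<noteq> S \<longrightarrow> (\<exists>a\<in>A. \<exists>b\<in>S - A. is_edge S a b))"

lemma G_connected_edge_from:
  assumes "G_connected S" "v \<in> S" "w \<in> S" "v \<noteq> w"
  obtains b where "b \<in> S" "b \<noteq> v" "is_edge S v b"
proof -
  have "{v} \<subseteq> S" "{v} \<noteq> S" using assms(2-4) by blast+
  then have "\<exists>a\<in>{v}. \<exists>b\<in>S - {v}. is_edge S a b" using assms(1) unfolding G_connected_def by blast
  with that show ?thesis by blast
qed

lemma cube_set_G_connected: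
  assumes "finite Y" "T \<inter> Y = {}"
  shows "G_connected (cube_set T Y)"
  unfolding G_connected_def
proof (intro allI impI)
  fix A assume A: "A \<subseteq> cube_set T Y" "A \<noteq> {}" "A \<noteq> cube_set T Y"
  then obtain a b where a: "a \<in> A" and b: "b \<in> cube_set T Y" "b \<notin> A" by blast
  have "\<exists>a\<in>A. \<exists>b\<in>cube_set T Y - A. is_edge (cube_set T Y) a b" if "a \<in> A" for a
    using that
  proof (induction "card (symdiff a b)" arbitrary: a rule: less_induct)
    case less
    have aQ: "a \<in> cube_set T Y" using less.prems A(1) by blast
    have sub: "symdiff a b \<subseteq> Y" by (rule symdiff_subset_support[OF assms(2) aQ b(1)])
    have "a \<noteq> b" using less.prems b(2) by blast
    then obtain x where x: "x \<in> symdiff a b" unfolding symdiff_def by blast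
    define a' where "a' = symdiff a {x}"
    have a'Q: "a' \<in> cube_set T Y"
      unfolding a'_def using symdiff_singleton_mem_cube_set[OF aQ _ assms(2)] x sub by blast
    have edge: "is_edge (cube_set T Y) a a'" unfolding is_edge_iff a'_def using aQ a'Q a'_def by blast
    show ?case
    proof (cases "a' \<in> A")
      case False
      then show ?thesis using less.prems a'Q edge by blast
    next
      case True
      have "symdiff a' b = symdiff a b - {x}" using x unfolding a'_def symdiff_def by auto
      moreover have "finite (symdiff a b)" using sub assms(1) finite_subset by blast
      ultimately have "card (symdiff a' b) < card (symdiff a b)" using x by (metis card_Diff1_less)
      then show ?thesis using less.hyps True by blast
    qed
  qed
  then show "\<exists>a\<in>A. \<exists>b\<in>cube_set T Y - A. is_edge (cube_set T Y) a b" using a by blast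
qed

lemma corner_edge_mem_max_cube:
  assumes "finite D" "D \<subseteq> Pow X" "corner X D c" "max_cube_of X D M" "c \<in> M" "is_edge D c a"
  shows "a \<in> M"
proof -
  obtain M' where M': "max_cube_of X D M'" "{c, a} \<subseteq> M'"
    using max_cube_of_superset[OF assms(1) cube_of_edge[OF assms(2,6)]] by blast
  then have "M' = M" using assms(3-5) unfolding corner_def by blast
  with M' show ?thesis by blast
qed

text \<open>Both edges at the corner lie in its unique maximal cube, hence so does the square they span.\<close>
lemma corner_square:
  assumes "finite D" "D \<subseteq> Pow X" "corner X D c" "is_edge D c a" "symdiff c {y} \<in> D"
  shows "symdiff a {y} \<in> D"
proof -
  obtain M where M: "max_cube_of X D M" "c \<in> M" and cD: "c \<in> D"
    using assms(3) unfolding corner_def by blast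
  then obtain T Y where MT: "M = cube_set T Y" "T \<inter> Y = {}" "M \<subseteq> D" by (auto elim: max_cube_ofE)
  have "is_edge D c (symdiff c {y})" unfolding is_edge_iff using cD assms(5) by blast
  then have "symdiff c {y} \<in> M" by (rule corner_edge_mem_max_cube[OF assms(1-3) M])
  then have "symdiff c (symdiff c {y}) \<subseteq> Y" using symdiff_subset_support[OF MT(2)] M(2) MT(1) by blast
  moreover have "a \<in> M" by (rule corner_edge_mem_max_cube[OF assms(1-3) M assms(4)])
  ultimately show ?thesis using symdiff_singleton_mem_cube_set[of a T Y y] MT by auto
qed

lemma G_connected_remove_corner:
  assumes "finite D" "D \<subseteq> Pow X" "corner X D c" "T \<inter> Y = {}"
    and conn: "G_connected (cube_set T Y \<inter> D)"
  shows "G_connected (cube_set T Y \<inter> (D - {c}))"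
proof (cases "c \<in> cube_set T Y")
  case False
  then have "cube_set T Y \<inter> (D - {c}) = cube_set T Y \<inter> D" by blast
  with conn show ?thesis by simp
next
  case cQ: True
  let ?Q = "cube_set T Y"
  let ?S = "?Q \<inter> D"
  let ?S' = "?Q \<inter> (D - {c})"
  have cD: "c \<in> D" using assms(3) unfolding corner_def by blast
  show ?thesis
    unfolding G_connected_def
  proof (intro allI impI; rule ccontr)
    fix A assume A: "A \<subseteq> ?S'" "A \<noteq> {}" "A \<noteq> ?S'"
      and no_edge: "\<not> (\<exists>a\<in>A. \<exists>b\<in>?S' - A. is_edge ?S' a b)"
    have crossing: "\<exists>a\<in>A'. \<exists>b\<in>?S - A'. is_edge ?S a b" if "A' \<subseteq> ?S" "A' \<noteq> {}" "A' \<noteq> ?S" for A'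
      using conn that unfolding G_connected_def by blast
    have no_edge': "\<not> is_edge ?S a b" if "a \<in> A" "b \<in> ?S' - A" for a b
      using no_edge that A(1) unfolding is_edge_def by blast
    obtain a b0 where a: "a \<in> A" "b0 \<in> ?S - A" "is_edge ?S a b0"
      using crossing[of A] A cQ cD by blast
    with no_edge' have "b0 = c" by blast
    with a obtain x where "c = symdiff a {x}" unfolding is_edge_iff by blast
    then have x: "a = symdiff c {x}" by simp
    obtain a0 b where b: "a0 \<in> insert c A" "b \<in> ?S' - A" "is_edge ?S a0 b"
      using crossing[of "insert c A"] A cQ cD by blast
    with no_edge' have "a0 = c" by blast
    with b obtain y where y: "b = symdiff c {y}"
      unfolding is_edge_iff by blast
    define d where "d = symdiff a {y}"
    have "x \<noteq> y" using x y a(1) b(2) by blast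
    then have "d \<noteq> c" unfolding d_def x symdiff_def by auto
    moreover have "d \<in> D"
    proof -
      have "is_edge D c a" using a(1) A(1) cD unfolding is_edge_iff x by blast
      then show ?thesis unfolding d_def using corner_square[OF assms(1-3)] b(2) y by blast
    qed
    moreover have "d \<in> ?Q"
    proof -
      have "symdiff c b \<subseteq> Y" using symdiff_subset_support[OF assms(4) cQ, of b] b(2) by blast
      then have "y \<in> Y" unfolding y by simp
      moreover have "a \<in> ?Q" using a(1) A(1) by blast
      ultimately show ?thesis unfolding d_def using assms(4) by (simp add: symdiff_singleton_mem_cube_set)
    qed
    ultimately have d: "d \<in> ?S'" by blast
    have "d = symdiff b {x}" unfolding d_def x y by (rule symdiff_singleton_commute)
    then have "is_edge ?S' a d" "is_edge ?S' b d"
      using d a(1) A(1) b(2) unfolding is_edge_iff d_def by blast+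
    then show False using no_edge a(1) b(2) d is_edge_commute by blast
  qed
qed

section \<open>Reversing edges of a unique sink orientation\<close>

text \<open>An arrow predicate arr u x says that the x-edge at u points away from u; a cube is given
  by its fixed part T and its support Y.\<close>
definition cube_sink :: "('a set \<Rightarrow> 'a \<Rightarrow> bool) \<Rightarrow> 'a set \<Rightarrow> 'a set \<Rightarrow> 'a set \<Rightarrow> bool" where
  "cube_sink arr T Y v \<longleftrightarrow> v \<in> cube_set T Y \<and> (\<forall>x\<in>Y. \<not> arr v x)"

definition facet_closed :: "('a set \<times> 'a set) set \<Rightarrow> bool" where
  "facet_closed K \<longleftrightarrow>
     (\<forall>(T, Y) \<in> K. T \<inter> Y = {} \<and> (\<forall>i\<in>Y. (T, Y - {i}) \<in> K \<and> (insert i T, Y - {i}) \<in> K))"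

definition unique_sinks :: "('a set \<times> 'a set) set \<Rightarrow> ('a set \<Rightarrow> 'a \<Rightarrow> bool) \<Rightarrow> bool" where
  "unique_sinks K arr \<longleftrightarrow> (\<forall>(T, Y) \<in> K. \<exists>!v. cube_sink arr T Y v)"

lemma facet_closedD:
  assumes "facet_closed K" "(T, Y) \<in> K"
  shows "T \<inter> Y = {}" "i \<in> Y \<Longrightarrow> (T, Y - {i}) \<in> K" "i \<in> Y \<Longrightarrow> (insert i T, Y - {i}) \<in> K"
proof -
  from assms have "case (T, Y) of (T, Y) \<Rightarrow>
      T \<inter> Y = {} \<and> (\<forall>i\<in>Y. (T, Y - {i}) \<in> K \<and> (insert i T, Y - {i}) \<in> K)"
    unfolding facet_closed_def by (rule bspec)
  then show "T \<inter> Y = {}" "i \<in> Y \<Longrightarrow> (T, Y - {i}) \<in> K" "i \<in> Y \<Longrightarrow> (insert i T, Y - {i}) \<in> K"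
    by simp_all
qed

lemma unique_sinksD:
  assumes "unique_sinks K arr" "(T, Y) \<in> K"
  shows "\<exists>!v. cube_sink arr T Y v"
proof -
  from assms have "case (T, Y) of (T, Y) \<Rightarrow> \<exists>!v. cube_sink arr T Y v"
    unfolding unique_sinks_def by (rule bspec)
  then show ?thesis by simp
qed

lemma cube_sink_split:
  assumes "i \<in> Y" "i \<notin> T"
  shows "cube_sink arr T Y v \<longleftrightarrow>
    (cube_sink arr T (Y - {i}) v \<or> cube_sink arr (insert i T) (Y - {i}) v) \<and> \<not> arr v i"
proof -
  have "v \<in> cube_set T Y \<longleftrightarrow> v \<in> cube_set T (Y - {i}) \<or> v \<in> cube_set (insert i T) (Y - {i})"
    using assms unfolding mem_cube_set_iff by blast
  moreover have "(\<forall>x\<in>Y. \<not> arr v x) \<longleftrightarrow> (\<forall>x\<in>Y - {i}. \<not> arr v x) \<and> \<not> arr v i"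
    using assms(1) by blast
  ultimately show ?thesis unfolding cube_sink_def by blast
qed

lemma unique_sinks_flip:
  assumes K: "facet_closed K" and sinks: "unique_sinks K arr"
  shows "unique_sinks K (\<lambda>u x. arr u x \<noteq> (x = i))" (is "unique_sinks K ?arr")
  unfolding unique_sinks_def
proof (intro ballI, clarify)
  fix T Y assume TY: "(T, Y) \<in> K"
  show "\<exists>!v. cube_sink ?arr T Y v"
  proof (cases "i \<in> Y")
    case False
    then have "cube_sink ?arr T Y = cube_sink arr T Y" unfolding cube_sink_def by auto
    with unique_sinksD[OF sinks TY] show ?thesis by simp
  next
    case True
    have iT: "i \<notin> T" using facet_closedD(1)[OF K TY] True by blast
    have same_on_facets: "cube_sink ?arr T' (Y - {i}) = cube_sink arr T' (Y - {i})" for T'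
      unfolding cube_sink_def by auto
    obtain s0 where s0: "\<And>v. cube_sink arr T (Y - {i}) v \<longleftrightarrow> v = s0"
      using unique_sinksD[OF sinks facet_closedD(2)[OF K TY True]] by (elim ex1E) blast
    obtain s1 where s1: "\<And>v. cube_sink arr (insert i T) (Y - {i}) v \<longleftrightarrow> v = s1"
      using unique_sinksD[OF sinks facet_closedD(3)[OF K TY True]] by (elim ex1E) blast
    have "s0 \<in> cube_set T (Y - {i})" "s1 \<in> cube_set (insert i T) (Y - {i})"
      using s0 s1 unfolding cube_sink_def by blast+
    then have "i \<notin> s0" "i \<in> s1" using iT unfolding mem_cube_set_iff by blast+
    then have "s0 \<noteq> s1" by blast
    have old: "cube_sink arr T Y v \<longleftrightarrow> (v = s0 \<or> v = s1) \<and> \<not> arr v i" for v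
      using cube_sink_split[OF True iT] s0 s1 by simp
    have new: "cube_sink ?arr T Y v \<longleftrightarrow> (v = s0 \<or> v = s1) \<and> arr v i" for v
      using cube_sink_split[OF True iT, of ?arr] same_on_facets s0 s1 by simp
    from unique_sinksD[OF sinks TY] \<open>s0 \<noteq> s1\<close> show ?thesis unfolding old new by blast
  qed
qed

lemma unique_sinks_flip_set:
  assumes "facet_closed K" "unique_sinks K arr" "finite A"
  shows "unique_sinks K (\<lambda>u x. arr u x \<noteq> (x \<in> A))"
  using assms(3)
proof (induction A rule: finite_induct)
  case empty
  then show ?case using assms(2) by simp
next
  case (insert i A)
  have "(\<lambda>u x. arr u x \<noteq> (x \<in> insert i A)) = (\<lambda>u x. (arr u x \<noteq> (x \<in> A)) \<noteq> (x = i))"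
    using insert.hyps(2) by (auto simp: fun_eq_iff)
  then show ?case using unique_sinks_flip[OF assms(1) insert.IH] by simp
qed

text \<open>Reversing all arrows in the directions of a cube turns its sources into sinks.\<close>
lemma unique_source:
  assumes "facet_closed K" "unique_sinks K arr" "(T, Y) \<in> K" "finite Y"
    and "u \<in> cube_set T Y" "\<forall>x\<in>Y. arr u x"
    and "v \<in> cube_set T Y" "\<forall>x\<in>Y. arr v x"
  shows "u = v"
proof -
  let ?rev = "\<lambda>u x. arr u x \<noteq> (x \<in> Y)"
  have "unique_sinks K ?rev" using unique_sinks_flip_set assms(1,2,4) .
  then have "\<exists>!w. cube_sink ?rev T Y w" using assms(3) by (rule unique_sinksD)
  moreover have "cube_sink ?rev T Y u" "cube_sink ?rev T Y v"
    using assms(5-8) unfolding cube_sink_def by auto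
  ultimately show ?thesis by blast
qed

lemma facet_closed_cubes: "facet_closed {(T, Y). T \<inter> Y = {} \<and> cube_set T Y \<subseteq> C}"
proof -
  have "cube_set T (Y - {i}) \<subseteq> cube_set T Y" "cube_set (insert i T) (Y - {i}) \<subseteq> cube_set T Y"
    if "i \<in> Y" for T Y and i :: 'a
    using that unfolding subset_iff mem_cube_set_iff by blast+
  then show ?thesis unfolding facet_closed_def by blast
qed

definition out_cube :: "'a set \<Rightarrow> ('a set \<times> 'a set) set \<Rightarrow> 'a set \<Rightarrow> 'a set set" where
  "out_cube X ori c = cube_set (c - out_map X ori c) (out_map X ori c)"

lemma self_mem_out_cube: "c \<in> out_cube X ori c"
  unfolding out_cube_def mem_cube_set_iff by blast

lemma orientation_reverse:
  assumes "orientation C ori" "is_edge C a b" "(a, b) \<notin> ori"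
  shows "(b, a) \<in> ori"
  using assms unfolding orientation_def by blast

lemma orientation_edge:
  assumes "orientation C ori" "(a, b) \<in> ori"
  shows "is_edge C a b"
  using assms unfolding orientation_def by blast

lemma corner_if_greatest_cube:
  assumes "cube_of X D R" "c \<in> R" "\<And>Q. cube_of X D Q \<Longrightarrow> c \<in> Q \<Longrightarrow> Q \<subseteq> R"
  shows "corner X D c"
proof -
  have "max_cube_of X D R" using assms unfolding max_cube_of_def by blast
  moreover have "Q = R" if "max_cube_of X D Q" "c \<in> Q" for Q
    using that assms unfolding max_cube_of_def by blast
  ultimately show ?thesis using assms(1,2) unfolding corner_def cube_of_def by blast
qed

lemma corner_peeling_Nil: "corner_peeling X {} []"
  unfolding corner_peeling_def by simp

lemma corner_peeling_snoc:
  assumes "corner_peeling X (D - {c}) cs" "c \<in> D" "corner X D c"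
  shows "corner_peeling X D (cs @ [c])"
proof -
  have cs: "distinct cs" "set cs = D - {c}" "\<And>i. i < length cs \<Longrightarrow> corner X (set (take (Suc i) cs)) (cs ! i)"
    using assms(1) unfolding corner_peeling_def by auto
  have "corner X (set (take (Suc i) (cs @ [c]))) ((cs @ [c]) ! i)" if "i < Suc (length cs)" for i
  proof (cases "i < length cs")
    case True
    then show ?thesis using cs(3) by (simp add: nth_append)
  next
    case False
    with that have "i = length cs" by simp
    then show ?thesis using cs(2) assms(2,3) by (simp add: insert_absorb)
  qed
  then show ?thesis using cs(1,2) assms(2) unfolding corner_peeling_def by auto
qed

section \<open>Corner peelings from acyclic unique sink orientations\<close>

locale acyclic_uso =
  fixes X :: "'a set" and C :: "'a set set" and ori :: "('a set \<times> 'a set) set"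
  assumes finite_X: "finite X" and C_Pow: "C \<subseteq> Pow X"
    and ori: "orientation C ori" and acyclic: "acyclic ori"
    and uso: "unique_sink_orientation X C ori"
begin

lemma finite_C: "finite C"
  using C_Pow finite_X by (meson finite_Pow_iff finite_subset)

lemma wf_ori: "wf ori"
proof -
  note finite_C
  moreover have "ori \<subseteq> C \<times> C" using orientation_edge[OF ori] unfolding is_edge_def by auto
  ultimately have "finite ori" using finite_subset by blast
  then show ?thesis using acyclic by (rule finite_acyclic_wf)
qed

lemma out_cube_subset: "c \<in> C \<Longrightarrow> out_cube X ori c \<subseteq> C"
  using uso unfolding unique_sink_orientation_def out_cube_def by blast

lemma sink_iff_no_out_direction:
  assumes "v \<in> cube_set T Y" "T \<inter> Y = {}"
  shows "(\<forall>w\<in>cube_set T Y. (v, w) \<notin> ori) \<longleftrightarrow> (\<forall>x\<in>Y. (v, symdiff v {x}) \<notin> ori)"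
proof
  assume "\<forall>w\<in>cube_set T Y. (v, w) \<notin> ori"
  then show "\<forall>x\<in>Y. (v, symdiff v {x}) \<notin> ori"
    using symdiff_singleton_mem_cube_set[OF assms(1) _ assms(2)] by blast
next
  assume no_out: "\<forall>x\<in>Y. (v, symdiff v {x}) \<notin> ori"
  show "\<forall>w\<in>cube_set T Y. (v, w) \<notin> ori"
  proof (intro ballI notI)
    fix w assume w: "w \<in> cube_set T Y" and vw: "(v, w) \<in> ori"
    then obtain x where x: "w = symdiff v {x}"
      using orientation_edge[OF ori] unfolding is_edge_iff by blast
    then have "x \<in> Y" using symdiff_subset_support[OF assms(2,1) w] by simp
    with no_out vw x show False by blast
  qed
qed

lemma unique_sinks_ori:
  "unique_sinks {(T, Y). T \<inter> Y = {} \<and> cube_set T Y \<subseteq> C} (\<lambda>u x. (u, symdiff u {x}) \<in> ori)"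
  unfolding unique_sinks_def
proof (intro ballI, clarify)
  fix T Y assume TY: "T \<inter> Y = {}" "cube_set T Y \<subseteq> C"
  then have "\<exists>!v. v \<in> cube_set T Y \<and> (\<forall>w\<in>cube_set T Y. (v, w) \<notin> ori)"
    using uso cube_of_cube_set[OF C_Pow] unfolding unique_sink_orientation_def by blast
  moreover have "cube_sink (\<lambda>u x. (u, symdiff u {x}) \<in> ori) T Y v \<longleftrightarrow>
      v \<in> cube_set T Y \<and> (\<forall>w\<in>cube_set T Y. (v, w) \<notin> ori)" for v
    unfolding cube_sink_def using sink_iff_no_out_direction[OF _ TY(1)] by blast
  ultimately show "\<exists>!v. cube_sink (\<lambda>u x. (u, symdiff u {x}) \<in> ori) T Y v" by simp
qed

text \<open>c is the unique source of its out-cube, so by well-foundedness every vertex of the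
  out-cube can be traced back to c along incoming edges.\<close>
lemma out_cube_reachable:
  assumes c: "c \<in> C" and w: "w \<in> out_cube X ori c"
  shows "(c, w) \<in> ori\<^sup>*"
proof -
  define r where "r = out_map X ori c"
  let ?R = "cube_set (c - r) r"
  let ?arr = "\<lambda>u x. (u, symdiff u {x}) \<in> ori"
  have "r \<subseteq> X" unfolding r_def out_map_def by blast
  then have finite_r: "finite r" using finite_X finite_subset by blast
  have R: "(c - r, r) \<in> {(T, Y). T \<inter> Y = {} \<and> cube_set T Y \<subseteq> C}"
    using out_cube_subset[OF c] unfolding out_cube_def r_def by blast
  have c_source: "\<forall>x\<in>r. ?arr c x" unfolding r_def out_map_def by blast
  have "w \<in> ?R \<Longrightarrow> (c, w) \<in> ori\<^sup>*"
  proof (induction w rule: wf_induct_rule[OF wf_ori])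
    case (1 w)
    show ?case
    proof (cases "\<forall>x\<in>r. ?arr w x")
      case True
      then have "w = c"
        using unique_source[OF facet_closed_cubes unique_sinks_ori R finite_r 1(2) True]
          self_mem_out_cube c_source unfolding out_cube_def r_def by blast
      then show ?thesis by simp
    next
      case False
      then obtain x where x: "x \<in> r" "\<not> ?arr w x" by blast
      define w' where "w' = symdiff w {x}"
      have w': "w' \<in> ?R" unfolding w'_def using symdiff_singleton_mem_cube_set[OF 1(2) x(1)] by blast
      then have "is_edge C w w'" unfolding is_edge_iff w'_def
        using 1(2) out_cube_subset[OF c] unfolding out_cube_def r_def by blast
      with x(2) have "(w', w) \<in> ori" using orientation_reverse[OF ori] unfolding w'_def by blast
      moreover from this have "(c, w') \<in> ori\<^sup>*" using 1(1) w' by blast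
      ultimately show ?thesis by simp
    qed
  qed
  then show ?thesis using w unfolding out_cube_def r_def by blast
qed

lemma cube_at_source_subset_out_cube:
  assumes "D \<subseteq> C" "c \<in> D" "\<forall>d\<in>D. (d, c) \<notin> ori" "cube_of X D Q" "c \<in> Q"
  shows "Q \<subseteq> out_cube X ori c"
proof -
  obtain T Y where Q: "Q = cube_set T Y" "Y \<subseteq> X" "T \<inter> Y = {}" "Q \<subseteq> D"
    using assms(4) unfolding cube_of_def by (auto elim: is_cubeE)
  have "Y \<subseteq> out_map X ori c"
  proof
    fix x assume x: "x \<in> Y"
    have "symdiff c {x} \<in> D" using symdiff_singleton_mem_cube_set[of c T Y x] assms(5) Q x by blast
    then have "is_edge C c (symdiff c {x})" "(symdiff c {x}, c) \<notin> ori"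
      using assms(1-3) unfolding is_edge_iff by blast+
    then have "(c, symdiff c {x}) \<in> ori" using orientation_reverse[OF ori is_edge_commute[THEN iffD1]] by blast
    then show "x \<in> out_map X ori c" unfolding out_map_def using x Q(2) by blast
  qed
  then show ?thesis
    unfolding Q(1) out_cube_def using assms(5) self_mem_out_cube Q(1)
    by (intro cube_set_subset_cube_set) (auto simp: out_cube_def)
qed

lemma corner_if_source:
  assumes "D \<subseteq> C" "ori `` D \<subseteq> D" "c \<in> D" "\<forall>d\<in>D. (d, c) \<notin> ori"
  shows "corner X D c"
proof (rule corner_if_greatest_cube)
  have "out_cube X ori c \<subseteq> D"
    using out_cube_reachable assms(1,3) Image_closed_trancl[OF assms(2)] by blast
  moreover have "D \<subseteq> Pow X" using assms(1) C_Pow by blast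
  ultimately show "cube_of X D (out_cube X ori c)" unfolding out_cube_def
    by (intro cube_of_cube_set) auto
  show "c \<in> out_cube X ori c" by (rule self_mem_out_cube)
  show "Q \<subseteq> out_cube X ori c" if "cube_of X D Q" "c \<in> Q" for Q
    by (rule cube_at_source_subset_out_cube[OF assms(1,3,4) that])
qed

text \<open>A source of D is peeled last; removing it keeps D closed under out-edges.\<close>
lemma corner_peeling_if_closed:
  assumes "D \<subseteq> C" "ori `` D \<subseteq> D"
  shows "\<exists>cs. corner_peeling X D cs"
proof -
  have "finite D" using finite_subset[OF assms(1) finite_C] .
  from this assms show ?thesis
  proof (induction D rule: finite_remove_induct)
    case empty
    then show ?case using corner_peeling_Nil by blast
  next
    case (remove D)
    obtain c where c: "c \<in> D" "\<forall>d\<in>D. (d, c) \<notin> ori"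
      using wfE_min[OF wf_ori, of _ D] \<open>D \<noteq> {}\<close> by (metis ex_in_conv)
    have "ori `` (D - {c}) \<subseteq> D - {c}" using remove.prems(2) c(2) by blast
    then obtain cs where "corner_peeling X (D - {c}) cs"
      using remove.IH[OF c(1)] remove.prems(1) by blast
    from corner_peeling_snoc[OF this c(1) corner_if_source[OF remove.prems c]] show ?case ..
  qed
qed

lemma corner_peeling_exists: "\<exists>cs. corner_peeling X C cs"
  using corner_peeling_if_closed orientation_edge[OF ori] unfolding is_edge_def by blast

end

section \<open>Unique sink orientations from corner peelings\<close>

definition peeling_orientation :: "'a set set \<Rightarrow> 'a set list \<Rightarrow> ('a set \<times> 'a set) set" where
  "peeling_orientation C cs =
     {(cs ! i, cs ! j) | i j. j < i \<and> i < length cs \<and> is_edge C (cs ! i) (cs ! j)}"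

locale corner_peeled =
  fixes X :: "'a set" and C :: "'a set set" and cs :: "'a set list"
  assumes finite_X: "finite X" and C_Pow: "C \<subseteq> Pow X"
    and peeling: "corner_peeling X C cs"
begin

abbreviation ori :: "('a set \<times> 'a set) set" where
  "ori \<equiv> peeling_orientation C cs"

abbreviation prefix :: "nat \<Rightarrow> 'a set set" where
  "prefix k \<equiv> set (take k cs)"

lemma distinct_cs: "distinct cs" and set_cs: "set cs = C"
  and corner_prefix: "i < length cs \<Longrightarrow> corner X (prefix (Suc i)) (cs ! i)"
  using peeling unfolding corner_peeling_def by auto

lemma nth_eq_nth_iff: "i < length cs \<Longrightarrow> j < length cs \<Longrightarrow> cs ! i = cs ! j \<longleftrightarrow> i = j"
  using distinct_cs by (simp add: nth_eq_iff_index_eq)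

lemma mem_C_iff: "c \<in> C \<longleftrightarrow> (\<exists>i < length cs. c = cs ! i)"
  unfolding set_cs[symmetric] in_set_conv_nth by metis

lemma mem_prefix_iff: "k \<le> length cs \<Longrightarrow> c \<in> prefix k \<longleftrightarrow> (\<exists>i < k. c = cs ! i)"
  by (auto simp: in_set_conv_nth)

lemma nth_mem_prefix: "j < k \<Longrightarrow> k \<le> length cs \<Longrightarrow> cs ! j \<in> prefix k"
  by (auto simp: in_set_conv_nth intro!: exI[of _ j])

lemma prefix_subset_C: "prefix k \<subseteq> C"
  using set_cs set_take_subset by metis

lemma finite_prefix: "finite (prefix k)" and prefix_Pow: "prefix k \<subseteq> Pow X"
  using prefix_subset_C C_Pow by auto

lemma prefix_Suc: "k < length cs \<Longrightarrow> prefix (Suc k) = insert (cs ! k) (prefix k)"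
  by (simp add: take_Suc_conv_app_nth)

lemma nth_notin_prefix: "k < length cs \<Longrightarrow> cs ! k \<notin> prefix k"
  using nth_eq_nth_iff mem_prefix_iff by fastforce

lemma mem_oriE:
  assumes "(a, b) \<in> ori"
  obtains i j where "j < i" "i < length cs" "a = cs ! i" "b = cs ! j" "is_edge C a b"
  using assms unfolding peeling_orientation_def by blast

lemma nth_mem_ori_iff:
  assumes "i < length cs" "j < length cs"
  shows "(cs ! i, cs ! j) \<in> ori \<longleftrightarrow> j < i \<and> is_edge C (cs ! i) (cs ! j)"
proof
  assume "(cs ! i, cs ! j) \<in> ori"
  then show "j < i \<and> is_edge C (cs ! i) (cs ! j)"
    by (elim mem_oriE) (metis assms nth_eq_nth_iff order.strict_trans)
qed (use assms in \<open>auto simp: peeling_orientation_def\<close>)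

lemma orientation_ori: "orientation C ori"
  unfolding orientation_def
proof (intro conjI allI impI)
  show "\<forall>(a, b) \<in> ori. is_edge C a b" by (blast elim: mem_oriE)
  fix a b assume e: "is_edge C a b"
  then obtain i j where ij: "i < length cs" "j < length cs" "a = cs ! i" "b = cs ! j"
    unfolding is_edge_def mem_C_iff by blast
  have "a \<noteq> b" using e unfolding is_edge_def symdiff_def by auto
  then have "i \<noteq> j" using ij by blast
  moreover have "is_edge C b a" using e is_edge_commute by blast
  ultimately show "(a, b) \<in> ori \<longleftrightarrow> (b, a) \<notin> ori"
    unfolding ij(3,4) using nth_mem_ori_iff[OF ij(1,2)] nth_mem_ori_iff[OF ij(2,1)] e ij by auto
qed

lemma acyclic_ori: "acyclic ori"
proof -
  define pos where "pos a = (THE i. i < length cs \<and> cs ! i = a)" for a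
  have pos: "pos (cs ! i) = i" if "i < length cs" for i
    unfolding pos_def using that nth_eq_nth_iff by (intro the_equality) auto
  have "ori\<inverse> \<subseteq> inv_image less_than pos" by (auto elim!: mem_oriE simp: pos)
  then have "wf (ori\<inverse>)" by (rule wf_subset[rotated]) simp
  then show ?thesis using wf_acyclic acyclic_converse by blast
qed

text \<open>The out-edges of cs ! i lead into the prefix in which it is a corner, hence into its
  unique maximal cube there.\<close>
lemma out_cube_subset: "c \<in> C \<Longrightarrow> out_cube X ori c \<subseteq> C"
proof -
  assume "c \<in> C"
  then obtain i where i: "i < length cs" "c = cs ! i" unfolding mem_C_iff by blast
  let ?D = "prefix (Suc i)"
  have corner: "corner X ?D c" using corner_prefix i by simp
  then obtain M where M: "max_cube_of X ?D M" "c \<in> M" unfolding corner_def by blast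
  then obtain T Y where MT: "M = cube_set T Y" "T \<inter> Y = {}" "M \<subseteq> ?D" by (auto elim: max_cube_ofE)
  have "out_map X ori c \<subseteq> Y"
  proof
    fix x assume "x \<in> out_map X ori c"
    then have out: "(c, symdiff c {x}) \<in> ori" unfolding out_map_def by blast
    then obtain j where "j < i" "symdiff c {x} = cs ! j"
      using i nth_eq_nth_iff by (elim mem_oriE) (metis order.strict_trans)
    then have "symdiff c {x} \<in> ?D" using nth_mem_prefix i(1) by simp
    then have "is_edge ?D c (symdiff c {x})" using corner unfolding corner_def is_edge_iff by blast
    then have "symdiff c {x} \<in> M" by (rule corner_edge_mem_max_cube[OF finite_prefix prefix_Pow corner M])
    then have "symdiff c (symdiff c {x}) \<subseteq> Y" using symdiff_subset_support[OF MT(2)] M(2) MT(1) by blast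
    then show "x \<in> Y" by simp
  qed
  then have "out_cube X ori c \<subseteq> M"
    unfolding out_cube_def MT(1) using self_mem_out_cube M(2) MT(1,2)
    by (intro cube_set_subset_cube_set) (auto simp: out_cube_def)
  then show ?thesis using MT(3) prefix_subset_C by blast
qed

text \<open>Removing the corners cs ! (length cs - 1), ..., cs ! k one at a time keeps the part of a
  cube inside the remaining prefix connected.\<close>
lemma G_connected_cube_inter_prefix:
  assumes "T \<inter> Y = {}" "cube_set T Y \<subseteq> C" "finite Y" "k \<le> length cs"
  shows "G_connected (cube_set T Y \<inter> prefix k)"
  using assms(4)
proof (induction k rule: inc_induct)
  case base
  have "cube_set T Y \<inter> prefix (length cs) = cube_set T Y" using assms(2) set_cs by auto
  then show ?case using cube_set_G_connected[OF assms(3,1)] by simp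
next
  case (step k)
  have "prefix k = prefix (Suc k) - {cs ! k}"
    using prefix_Suc nth_notin_prefix step.hyps(2) by auto
  then show ?case
    using G_connected_remove_corner[OF finite_prefix prefix_Pow corner_prefix assms(1) step.IH]
      step.hyps(2) by simp
qed

text \<open>The unique sink of a cube is its earliest vertex: by connectivity, any later vertex v has a
  neighbour in the cube that precedes it.\<close>
lemma unique_sink_ori:
  assumes "cube_of X C Q"
  shows "\<exists>!v. v \<in> Q \<and> (\<forall>w\<in>Q. (v, w) \<notin> ori)"
proof -
  obtain T Y where Q: "Q = cube_set T Y" "Y \<subseteq> X" "T \<inter> Y = {}" "Q \<subseteq> C"
    using assms unfolding cube_of_def by (auto elim: is_cubeE)
  have "finite Y" using Q(2) finite_X finite_subset by blast
  have "T \<in> Q" unfolding Q(1) by (rule fixed_part_mem_cube_set)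
  moreover obtain i0 where "i0 < length cs" "T = cs ! i0" using \<open>T \<in> Q\<close> Q(4) mem_C_iff by blast
  ultimately have i0: "i0 < length cs" "cs ! i0 \<in> Q" by simp_all
  define m where "m = (LEAST i. cs ! i \<in> Q)"
  have m_le: "m \<le> i" if "cs ! i \<in> Q" for i
    unfolding m_def using that by (rule Least_le)
  have m: "cs ! m \<in> Q" "m < length cs"
    using LeastI[of "\<lambda>i. cs ! i \<in> Q", OF i0(2)] m_le[OF i0(2)] i0(1) unfolding m_def by simp_all
  have m_sink: "\<forall>w\<in>Q. (cs ! m, w) \<notin> ori"
  proof (intro ballI notI)
    fix w assume "w \<in> Q" "(cs ! m, w) \<in> ori"
    then obtain i j where ij: "j < i" "i < length cs" "cs ! m = cs ! i" "w = cs ! j" "w \<in> Q"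
      by (elim mem_oriE) blast
    then have "i = m" using nth_eq_nth_iff m(2) by blast
    with ij m_le show False by fastforce
  qed
  have "v = cs ! m" if v: "v \<in> Q" "\<forall>w\<in>Q. (v, w) \<notin> ori" for v
  proof (rule ccontr)
    assume "v \<noteq> cs ! m"
    obtain i where i: "i < length cs" "v = cs ! i" using v(1) Q(4) mem_C_iff by blast
    have "m \<le> i" using m_le v(1) i(2) by blast
    let ?S = "Q \<inter> prefix (Suc i)"
    have "G_connected ?S" unfolding Q(1)
      by (rule G_connected_cube_inter_prefix) (use Q i(1) \<open>finite Y\<close> in auto)
    moreover have "v \<in> ?S" "cs ! m \<in> ?S"
      using i v(1) m(1) \<open>m \<le> i\<close> nth_mem_prefix[of _ "Suc i"] by auto
    ultimately obtain b where b: "b \<in> ?S" "b \<noteq> v" "is_edge ?S v b"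
      using \<open>v \<noteq> cs ! m\<close> by (rule G_connected_edge_from)
    then obtain j where j: "j < Suc i" "b = cs ! j"
      using mem_prefix_iff[of "Suc i"] i(1) by (auto simp: Suc_le_eq)
    then have "j < i" using b(2) i(2) by (auto simp: less_Suc_eq)
    moreover have "is_edge C v b" using b(3) Q(4) is_edge_mono by blast
    ultimately have "(v, b) \<in> ori" using nth_mem_ori_iff i j by simp
    then show False using v(2) b(1) by blast
  qed
  then show ?thesis using m(1) m_sink by blast
qed

lemma unique_sink_orientation_ori: "unique_sink_orientation X C ori"
  unfolding unique_sink_orientation_def
  using out_cube_subset unique_sink_ori unfolding out_cube_def by blast

end

theorem proposition6p4:
  fixes X :: "'a set" and C :: "'a set set"
  assumes "finite X" and "ample X C"
  shows "(\<exists>cs. corner_peeling X C cs) \<longleftrightarrow>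
         (\<exists>ori. orientation C ori \<and> acyclic ori \<and> unique_sink_orientation X C ori)"
proof -
  have C_Pow: "C \<subseteq> Pow X" using assms(2) unfolding ample_def by blast
  show ?thesis
  proof
    assume "\<exists>cs. corner_peeling X C cs"
    then obtain cs where "corner_peeling X C cs" ..
    then interpret corner_peeled X C cs using assms(1) C_Pow by unfold_locales
    show "\<exists>ori. orientation C ori \<and> acyclic ori \<and> unique_sink_orientation X C ori"
      using orientation_ori acyclic_ori unique_sink_orientation_ori by blast
  next
    assume "\<exists>ori. orientation C ori \<and> acyclic ori \<and> unique_sink_orientation X C ori"
    then obtain ori where "orientation C ori" "acyclic ori" "unique_sink_orientation X C ori" by blast
    then interpret acyclic_uso X C ori using assms(1) C_Pow by unfold_locales
    show "\<exists>cs. corner_peeling X C cs" by (rule corner_peeling_exists)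
  qed
qed

end
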